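(* Let $\rho$ be a probability distribution on $\mathbb{R}^d\times\mathbb{R}$ with $\mathbb{E}\|a\|^2<\infty$, $\mathbb{E}[b^2]<\infty$, $H=\mathbb{E}[aa^\top]$ invertible with largest eigenvalue $L$, and let $x_*$ minimize $\mathcal{R}(x)=\frac12\mathbb{E}_\rho(\langle x,a\rangle-b)^2$. Assume there is a finite constant $\kappa$ such that $\mathbb{E}[\langle a,Ma\rangle aa^\top]\preccurlyeq\kappa\,\mathrm{tr}(MH)H$ for every positive semidefinite $M$, and let $0<\alpha\le\beta\le 1/L$. Let $\theta^b_t$ be the bias process defined in the context started from $x_0$, and set $f_t=\langle\Upsilon,\mathbb{E}[\theta^b_t\otimes\theta^b_t]\rangle$. Then for every $T\ge0$, $$f_T\le\min\left\{\frac1\alpha,\frac{8(T+1)}{\beta}\right\}\|x_0-x_*\|^2+\sum_{k=0}^{T-1}g(T-k-1)\,f_k,$$ where the kernel is $g(s)=\kappa\left\langle\Upsilon,\ A^s\,\mathcal{N}\,(A^\top)^s\right\rangle$ for $s\ge0$.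
   Context: $\preccurlyeq$ is the Loewner order, $\langle\cdot,\cdot\rangle$ between matrices is the trace inner product, $\theta\otimes\theta=\theta\theta^\top$. Let $(a_t,b_t)_{t\ge0}$ be i.i.d. from $\rho$ and $J_t=\begin{bmatrix} I-\beta a_ta_t^\top & I-\beta a_ta_t^\top\\ -\alpha a_ta_t^\top & I-\alpha a_ta_t^\top\end{bmatrix}$. Bias process: $\theta^b_0=\begin{bmatrix}0\\ x_0-x_*\end{bmatrix}$, $\theta^b_{t+1}=J_t\theta^b_t$. Further $A=\mathbb{E}[J_t]=\begin{bmatrix}I-\beta H&I-\beta H\\-\alpha H&I-\alpha H\end{bmatrix}$, $\Upsilon=\begin{bmatrix}H&H\\H&H\end{bmatrix}$, $\mathcal{N}=\begin{bmatrix}\beta^2H&\alpha\beta H\\ \alpha\beta H&\alpha^2H\end{bmatrix}$. *)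

theory Defs
  imports "HOL-Probability.Probability"
begin

text \<open>Matrices are elements of real^'n^'n (rows indexed first). 2d-dimensional
  block vectors/matrices are indexed by the sum type 'd + 'd: Inl i is the first
  block, Inr i the second block.\<close>

definition mtrace :: "real^'n^'n \<Rightarrow> real" where
  "mtrace M = (\<Sum>i\<in>UNIV. M $ i $ i)"

definition tr_inner :: "real^'n^'n \<Rightarrow> real^'n^'n \<Rightarrow> real" where
  "tr_inner M N = mtrace (transpose M ** N)"

definition outer :: "real^'n \<Rightarrow> real^'n \<Rightarrow> real^'n^'n" where
  "outer x y = (\<chi> i j. x $ i * y $ j)"

primrec mpow :: "real^'n^'n \<Rightarrow> nat \<Rightarrow> real^'n^'n" where
  "mpow M 0 = mat 1"
| "mpow M (Suc k) = M ** mpow M k"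

definition psd :: "real^'n^'n \<Rightarrow> bool" where
  "psd M \<longleftrightarrow> transpose M = M \<and> (\<forall>x. 0 \<le> x \<bullet> (M *v x))"

definition loewner_le :: "real^'n^'n \<Rightarrow> real^'n^'n \<Rightarrow> bool" where
  "loewner_le M N \<longleftrightarrow> psd (N - M)"

definition block :: "real^'d^'d \<Rightarrow> real^'d^'d \<Rightarrow> real^'d^'d \<Rightarrow> real^'d^'d
    \<Rightarrow> real^('d + 'd)^('d + 'd)" where
  "block P Q R S = (\<chi> i j. case i of
      Inl i' \<Rightarrow> (case j of Inl j' \<Rightarrow> P $ i' $ j' | Inr j' \<Rightarrow> Q $ i' $ j')
    | Inr i' \<Rightarrow> (case j of Inl j' \<Rightarrow> R $ i' $ j' | Inr j' \<Rightarrow> S $ i' $ j'))"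

definition bvec :: "real^'d \<Rightarrow> real^'d \<Rightarrow> real^('d + 'd)" where
  "bvec u v = (\<chi> i. case i of Inl i' \<Rightarrow> u $ i' | Inr i' \<Rightarrow> v $ i')"

definition Jmat :: "real \<Rightarrow> real \<Rightarrow> real^'d \<Rightarrow> real^('d + 'd)^('d + 'd)" where
  "Jmat \<alpha> \<beta> a = block (mat 1 - \<beta> *\<^sub>R outer a a) (mat 1 - \<beta> *\<^sub>R outer a a)
                        (- (\<alpha> *\<^sub>R outer a a)) (mat 1 - \<alpha> *\<^sub>R outer a a)"

text \<open>Bias process driven by the sample sequence \<omega> = ((a_0,b_0),(a_1,b_1),...).\<close>
primrec bias :: "real \<Rightarrow> real \<Rightarrow> real^'d \<Rightarrow> real^'d \<Rightarrow> (nat \<Rightarrow> (real^'d) \<times> real)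
    \<Rightarrow> nat \<Rightarrow> real^('d + 'd)" where
  "bias \<alpha> \<beta> x0 xs \<omega> 0 = bvec 0 (x0 - xs)"
| "bias \<alpha> \<beta> x0 xs \<omega> (Suc t) = Jmat \<alpha> \<beta> (fst (\<omega> t)) *v bias \<alpha> \<beta> x0 xs \<omega> t"

end

(*
  Write theta = (p, q) and w = p + q.  For a feature a, J(a) theta = A theta - C g(a) with
  C = [beta I; alpha I] and g(a) = (a . w) a - H w, which has mean zero.  Hence, for every
  positive semidefinite B,
    E[(J theta) . B (J theta)] <= (A theta) . B (A theta) + kappa <B, N> (theta . Upsilon theta)
  with N = C H C'; the kappa-term is the fourth-moment assumption applied to C' B C.
  As theta_t is independent of a_t, F_t(B) = E[theta_t . B theta_t] satisfies
  F_(t+1)(B) <= F_t(A' B A) + kappa <B, N> F_t(Upsilon), and unrolling this from B = Upsilon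
  gives f_T <= (A^T theta_0) . Upsilon (A^T theta_0) + sum_k g(T - k - 1) f_k.
  In an orthonormal eigenbasis of H the deterministic term splits into scalar recursions, one
  per eigenvalue mu: the potential a u^2 + (1 - a) v^2 with a = alpha mu is non-increasing,
  which gives the bound 1/alpha, and a geometric series gives (T + 1)/beta.
*)

theory Submission
  imports Defs
begin

section \<open>Symmetric matrices and quadratic forms\<close>

lemma mtrace_mult_comm:
  fixes A :: "real^'k^'n" and B :: "real^'n^'k"
  shows "mtrace (A ** B) = mtrace (B ** A)"
proof -
  have "mtrace (A ** B) = (\<Sum>i\<in>UNIV. \<Sum>k\<in>UNIV. A $ i $ k * B $ k $ i)"
    unfolding mtrace_def matrix_matrix_mult_def by simp
  also have "\<dots> = (\<Sum>k\<in>UNIV. \<Sum>i\<in>UNIV. B $ k $ i * A $ i $ k)"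
    by (subst sum.swap) (simp add: mult.commute)
  finally show ?thesis
    unfolding mtrace_def matrix_matrix_mult_def by simp
qed

lemma tr_inner_eq_sum: "tr_inner X Z = (\<Sum>i\<in>UNIV. \<Sum>j\<in>UNIV. X $ i $ j * Z $ i $ j)"
proof -
  have "tr_inner X Z = (\<Sum>j\<in>UNIV. \<Sum>i\<in>UNIV. X $ i $ j * Z $ i $ j)"
    unfolding tr_inner_def mtrace_def matrix_matrix_mult_def transpose_def by simp
  also have "\<dots> = (\<Sum>i\<in>UNIV. \<Sum>j\<in>UNIV. X $ i $ j * Z $ i $ j)"
    by (rule sum.swap)
  finally show ?thesis .
qed

lemma inner_mult_vec_eq_sum:
  "(x::real^'n) \<bullet> (Q *v x) = (\<Sum>i\<in>UNIV. \<Sum>j\<in>UNIV. Q $ i $ j * (x $ i * x $ j))"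
  unfolding inner_vec_def matrix_vector_mult_def by (simp add: sum_distrib_left mult_ac)

lemma inner_transpose_mult_vec: "y \<bullet> (transpose M *v z) = (M *v y) \<bullet> (z::real^'n)"
  by (metis dot_lmul_matrix inner_commute transpose_matrix_vector)

lemma inner_congruence:
  "y \<bullet> ((transpose M ** X ** M) *v y) = (M *v y) \<bullet> (X *v (M *v (y::real^'n)))"
proof -
  have "(transpose M ** X ** M) *v y = transpose M *v (X *v (M *v y))"
    by (simp only: matrix_vector_mul_assoc matrix_mul_assoc)
  then show ?thesis
    by (simp only: inner_transpose_mult_vec)
qed

lemma inner_congruence_eq_sum:
  "(M *v y) \<bullet> (X *v (M *v y)) = (\<Sum>k\<in>UNIV. \<Sum>l\<in>UNIV. (transpose M ** X ** M) $ k $ l * (y $ k * y $ l))"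
  by (rule trans[OF inner_congruence[symmetric] inner_mult_vec_eq_sum])

lemma tr_inner_congruence:
  fixes P :: "real^'n^'m"
  shows "tr_inner (transpose P ** X ** P) Z = tr_inner X (P ** Z ** transpose P)"
proof -
  have "tr_inner (transpose P ** X ** P) Z = mtrace ((transpose X ** (P ** Z)) ** transpose P)"
    unfolding tr_inner_def
    by (metis matrix_mul_assoc matrix_transpose_mul mtrace_mult_comm transpose_transpose)
  then show ?thesis
    unfolding tr_inner_def by (simp add: matrix_mul_assoc)
qed

lemma mtrace_congruence_mult:
  fixes E :: "real^'m^'n"
  shows "mtrace ((transpose E ** B ** E) ** H) = tr_inner (transpose B) (E ** H ** transpose E)"
proof -
  have "mtrace ((transpose E ** B ** E) ** H) = mtrace (transpose E ** (B ** E ** H))"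
    by (simp add: matrix_mul_assoc)
  also have "\<dots> = mtrace ((B ** E ** H) ** transpose E)"
    by (rule mtrace_mult_comm)
  finally show ?thesis
    by (simp add: tr_inner_def matrix_mul_assoc)
qed

lemma symmetric_inner_mult_vec:
  assumes "transpose H = H"
  shows "(H *v z) \<bullet> y = z \<bullet> (H *v (y::real^'n))"
  by (metis assms inner_commute inner_transpose_mult_vec)

lemma inner_diff_quadratic:
  fixes B :: "real^'n^'n" and E :: "real^'m^'n"
  assumes "transpose B = B"
  shows "(x - E *v g) \<bullet> (B *v (x - E *v g)) =
    x \<bullet> (B *v x) - 2 * (g \<bullet> (transpose E *v (B *v x))) + g \<bullet> ((transpose E ** B ** E) *v g)"
proof -
  have "x \<bullet> (B *v (E *v g)) = (E *v g) \<bullet> (B *v x)"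
    using symmetric_inner_mult_vec[OF assms, of x "E *v g"] by (simp add: inner_commute)
  moreover have "(E *v g) \<bullet> (B *v x) = g \<bullet> (transpose E *v (B *v x))"
    by (simp only: inner_transpose_mult_vec)
  ultimately show ?thesis
    by (simp add: inner_congruence matrix_vector_mult_diff_distrib inner_diff_left inner_diff_right)
qed

lemma psd_symmetric: "psd X \<Longrightarrow> transpose X = X"
  by (simp add: psd_def)

lemma psd_congruence:
  assumes "psd X"
  shows "psd (transpose M ** X ** M)"
  using assms unfolding psd_def
  by (simp add: inner_congruence matrix_transpose_mul matrix_mul_assoc)

lemma linear_plus_quadratic_nonneg_imp_zero:
  fixes b c :: real
  assumes nonneg: "\<And>t. 0 \<le> t * b + t\<^sup>2 * c"
  shows "b = 0"
proof (rule ccontr)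
  assume "b \<noteq> 0"
  define s where "s = 1 / (\<bar>c\<bar> + 1)"
  have s: "0 < s" "s * c < 1"
    unfolding s_def by (auto simp: field_simps abs_if)
  have "0 \<le> (s * b\<^sup>2) * (s * c - 1)"
    using nonneg[of "- s * b"] by (simp add: power2_eq_square algebra_simps)
  moreover have "0 < s * b\<^sup>2"
    using s \<open>b \<noteq> 0\<close> by simp
  ultimately show False
    using s by (simp add: zero_le_mult_iff)
qed

lemma symmetric_rayleigh_maximizer_eigenvector:
  fixes H :: "real^'n^'n"
  assumes symH: "transpose H = H" and S: "subspace S" and inv: "\<And>y. y \<in> S \<Longrightarrow> H *v y \<in> S"
    and e: "e \<in> S" and max: "\<And>z. z \<in> S \<Longrightarrow> z \<bullet> (H *v z) \<le> \<mu> * (z \<bullet> z)"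
    and attained: "e \<bullet> (H *v e) = \<mu> * (e \<bullet> e)"
  shows "H *v e = \<mu> *\<^sub>R e"
proof -
  \<comment> \<open>Q is nonnegative on S and vanishes at e, so its polar form vanishes at (e, y)
      for every y in S; for y = \<mu> e - H e this polar form is y \<bullet> y.\<close>
  define Q where "Q z = \<mu> * (z \<bullet> z) - z \<bullet> (H *v z)" for z
  define y where "y = \<mu> *\<^sub>R e - H *v e"
  have y: "y \<in> S"
    unfolding y_def using S e inv by (simp add: subspace_diff subspace_scale)
  have cross: "e \<bullet> (H *v y) = y \<bullet> (H *v e)"
    using symmetric_inner_mult_vec[OF symH, of y e] by (simp add: inner_commute)
  have "0 \<le> t * (2 * (y \<bullet> y)) + t\<^sup>2 * Q y" for t
  proof -
    have "0 \<le> Q (e + t *\<^sub>R y)"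
      using max[of "e + t *\<^sub>R y"] S e y unfolding Q_def by (simp add: subspace_add subspace_scale)
    also have "Q (e + t *\<^sub>R y) = Q e + 2 * t * (y \<bullet> (\<mu> *\<^sub>R e - H *v e)) + t\<^sup>2 * Q y"
      unfolding Q_def using cross
      by (simp add: matrix_vector_right_distrib matrix_vector_mult_scaleR inner_add_left inner_add_right
          inner_diff_right inner_commute power2_eq_square algebra_simps)
    finally show ?thesis
      using attained unfolding Q_def y_def[symmetric] by (simp add: algebra_simps)
  qed
  then have "2 * (y \<bullet> y) = 0"
    by (rule linear_plus_quadratic_nonneg_imp_zero)
  then show ?thesis
    unfolding y_def by simp
qed

lemma symmetric_invariant_subspace_eigenvector:
  fixes H :: "real^'n^'n"
  assumes symH: "transpose H = H" and S: "subspace S" and inv: "\<And>y. y \<in> S \<Longrightarrow> H *v y \<in> S"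
    and z: "z \<in> S" "z \<noteq> 0"
  obtains e \<mu> where "e \<in> S" "norm e = 1" "H *v e = \<mu> *\<^sub>R e"
proof -
  let ?K = "S \<inter> sphere 0 1"
  have "compact ?K"
    using closed_subspace[OF S] by (intro closed_Int_compact) auto
  moreover have "z /\<^sub>R norm z \<in> ?K"
    using z S by (auto simp: subspace_scale)
  ultimately obtain e where eK: "e \<in> ?K" and emax: "\<And>y. y \<in> ?K \<Longrightarrow> y \<bullet> (H *v y) \<le> e \<bullet> (H *v e)"
    using continuous_attains_sup[of ?K "\<lambda>y. y \<bullet> (H *v y)"] by (fastforce intro: continuous_intros)
  define \<mu> where "\<mu> = e \<bullet> (H *v e)"
  have ee: "e \<bullet> e = 1"
    using eK by (simp add: norm_eq_1)
  have "z \<bullet> (H *v z) \<le> \<mu> * (z \<bullet> z)" if "z \<in> S" for z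
  proof (cases "z = 0")
    case False
    have "z /\<^sub>R norm z \<in> ?K"
      using that False S by (auto simp: subspace_scale)
    then have "(z /\<^sub>R norm z) \<bullet> (H *v (z /\<^sub>R norm z)) \<le> \<mu>"
      using emax unfolding \<mu>_def by blast
    then have "(z \<bullet> (H *v z)) / (norm z)\<^sup>2 \<le> \<mu>"
      by (simp add: matrix_vector_mult_scaleR power2_eq_square divide_inverse mult_ac)
    then show ?thesis
      using False by (simp add: divide_le_eq power2_norm_eq_inner)
  qed simp
  then have "H *v e = \<mu> *\<^sub>R e"
    using symmetric_rayleigh_maximizer_eigenvector[OF symH S inv] eK ee \<mu>_def by simp
  then show ?thesis
    using that eK by auto
qed

lemma symmetric_eigenvector_orthogonal_complement:
  fixes H :: "real^'n^'n"
  assumes symH: "transpose H = H" and S: "subspace S" and inv: "\<And>y. y \<in> S \<Longrightarrow> H *v y \<in> S"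
    and e: "e \<in> S" "e \<noteq> 0" and he: "H *v e = \<mu> *\<^sub>R e"
  shows "subspace {x \<in> S. orthogonal x e}"
    and "\<And>y. y \<in> {x \<in> S. orthogonal x e} \<Longrightarrow> H *v y \<in> {x \<in> S. orthogonal x e}"
    and "dim {x \<in> S. orthogonal x e} < dim S"
proof -
  show S': "subspace {x \<in> S. orthogonal x e}"
    using S unfolding subspace_def orthogonal_def by (auto simp: inner_add_left)
  show "H *v y \<in> {x \<in> S. orthogonal x e}" if "y \<in> {x \<in> S. orthogonal x e}" for y
    using that inv symmetric_inner_mult_vec[OF symH, of y e] he
    unfolding orthogonal_def by (simp add: inner_commute)
  have "e \<notin> {x \<in> S. orthogonal x e}"
    using e(2) by (simp add: orthogonal_def)
  then have "{x \<in> S. orthogonal x e} \<subset> S"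
    using e(1) by blast
  then have "span {x \<in> S. orthogonal x e} \<subset> span S"
    using S' S by (simp add: span_eq_iff[THEN iffD2])
  then show "dim {x \<in> S. orthogonal x e} < dim S"
    by (rule dim_psubset)
qed

lemma symmetric_subspace_eigenbasis:
  fixes H :: "real^'n^'n"
  assumes symH: "transpose H = H"
  shows "subspace S \<Longrightarrow> (\<And>y. y \<in> S \<Longrightarrow> H *v y \<in> S) \<Longrightarrow>
    \<exists>B. finite B \<and> B \<subseteq> S \<and> pairwise orthogonal B \<and> (\<forall>e\<in>B. norm e = 1 \<and> (\<exists>\<mu>. H *v e = \<mu> *\<^sub>R e)) \<and>
        (\<forall>x\<in>S. x = (\<Sum>e\<in>B. (x \<bullet> e) *\<^sub>R e))"
proof (induction "dim S" arbitrary: S rule: less_induct)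
  case less
  show ?case
  proof (cases "S \<subseteq> {0}")
    case True
    then show ?thesis
      by (intro exI[of _ "{}"]) auto
  next
    case False
    then obtain z where "z \<in> S" "z \<noteq> 0"
      by blast
    then obtain e \<mu> where eS: "e \<in> S" and ne: "norm e = 1" and he: "H *v e = \<mu> *\<^sub>R e"
      using symmetric_invariant_subspace_eigenvector[OF symH less.prems] by blast
    define S' where "S' = {x \<in> S. orthogonal x e}"
    have "e \<noteq> 0"
      using ne by auto
    note S' = symmetric_eigenvector_orthogonal_complement[OF symH less.prems eS this he, folded S'_def]
    obtain B where B: "finite B" "B \<subseteq> S'" "pairwise orthogonal B"
        "\<forall>e\<in>B. norm e = 1 \<and> (\<exists>\<mu>. H *v e = \<mu> *\<^sub>R e)" "\<forall>x\<in>S'. x = (\<Sum>e\<in>B. (x \<bullet> e) *\<^sub>R e)"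
      using less.hyps[OF S'(3) S'(1,2)] by blast
    have orth: "orthogonal f e" if "f \<in> B" for f
      using that B(2) unfolding S'_def by auto
    have "x = (\<Sum>f\<in>insert e B. (x \<bullet> f) *\<^sub>R f)" if "x \<in> S" for x
    proof -
      define x' where "x' = x - (x \<bullet> e) *\<^sub>R e"
      have "x' \<in> S'"
        using that eS less.prems(1) ne unfolding S'_def x'_def orthogonal_def
        by (simp add: subspace_diff subspace_scale inner_diff_left norm_eq_1)
      moreover have "x' \<bullet> f = x \<bullet> f" if "f \<in> B" for f
        using orth[OF that] unfolding x'_def orthogonal_def by (simp add: inner_diff_left inner_commute[of e f])
      ultimately have "x' = (\<Sum>f\<in>B. (x \<bullet> f) *\<^sub>R f)"
        using B(5) by (metis (no_types, lifting) sum.cong)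
      moreover have "e \<notin> B"
        using B(2) ne unfolding S'_def orthogonal_def by (auto simp: norm_eq_1)
      ultimately show ?thesis
        using B(1) unfolding x'_def by (simp add: algebra_simps)
    qed
    moreover have "pairwise orthogonal (insert e B)"
      using B(3) orth by (auto simp: pairwise_insert orthogonal_commute)
    ultimately show ?thesis
      using B eS ne he unfolding S'_def by (intro exI[of _ "insert e B"]) auto
  qed
qed

lemma symmetric_matrix_eigenbasis:
  fixes H :: "real^'n^'n"
  assumes "transpose H = H"
  obtains B where "finite B" "pairwise orthogonal B" "\<And>e. e \<in> B \<Longrightarrow> norm e = 1"
    "\<And>e. e \<in> B \<Longrightarrow> \<exists>\<mu>. H *v e = \<mu> *\<^sub>R e" "\<And>x. x = (\<Sum>e\<in>B. (x \<bullet> e) *\<^sub>R e)"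
  using symmetric_subspace_eigenbasis[OF assms, of UNIV] by auto

section \<open>Block matrices and the step matrices\<close>

lemma sum_UNIV_Plus:
  fixes f :: "('a::finite + 'b::finite) \<Rightarrow> 'c::comm_monoid_add"
  shows "sum f UNIV = (\<Sum>i\<in>UNIV. f (Inl i)) + (\<Sum>i\<in>UNIV. f (Inr i))"
  using sum.Plus[of "UNIV :: 'a set" "UNIV :: 'b set" f] by (simp add: UNIV_Plus_UNIV o_def)

lemma bvec_nth [simp]: "bvec u v $ Inl i = u $ i" "bvec u v $ Inr i = v $ i"
  by (simp_all add: bvec_def)

lemma block_nth [simp]:
  "block P Q R S $ Inl i $ Inl j = P $ i $ j" "block P Q R S $ Inl i $ Inr j = Q $ i $ j"
  "block P Q R S $ Inr i $ Inl j = R $ i $ j" "block P Q R S $ Inr i $ Inr j = S $ i $ j"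
  by (simp_all add: block_def)

lemma bvec_cases:
  obtains p q where "\<theta> = bvec p q"
proof
  show "\<theta> = bvec (\<chi> i. \<theta> $ Inl i) (\<chi> i. \<theta> $ Inr i)"
    by (simp add: vec_eq_iff bvec_def split: sum.split)
qed

lemma inner_bvec: "bvec p q \<bullet> bvec p' q' = p \<bullet> p' + q \<bullet> q'"
  by (simp add: inner_vec_def sum_UNIV_Plus)

lemma bvec_zero: "bvec 0 0 = 0"
  and bvec_add: "bvec (p + p') (q + q') = bvec p q + bvec p' q'"
  and bvec_diff: "bvec (p - p') (q - q') = bvec p q - bvec p' q'"
  and bvec_scaleR: "bvec (c *\<^sub>R p) (c *\<^sub>R q) = c *\<^sub>R bvec p q"
  by (simp_all add: vec_eq_iff bvec_def split: sum.split)

lemma bvec_sum: "finite B \<Longrightarrow> bvec (\<Sum>e\<in>B. f e) (\<Sum>e\<in>B. g e) = (\<Sum>e\<in>B. bvec (f e) (g e))"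
  by (induction B rule: finite_induct) (simp_all add: bvec_zero bvec_add)

lemma block_mult_bvec: "block P Q R S *v bvec p q = bvec (P *v p + Q *v q) (R *v p + S *v q)"
proof -
  have "(block P Q R S *v bvec p q) $ i = bvec (P *v p + Q *v q) (R *v p + S *v q) $ i" for i
    by (cases i) (simp_all add: matrix_vector_mult_def sum_UNIV_Plus)
  then show ?thesis
    by (simp add: vec_eq_iff)
qed

lemma inner_block_all_bvec: "bvec p q \<bullet> (block H H H H *v bvec p q) = (p + q) \<bullet> (H *v (p + q))"
  by (simp add: block_mult_bvec inner_bvec matrix_vector_right_distrib inner_add_left inner_add_right)

lemma psd_block_all:
  assumes "psd H"
  shows "psd (block H H H H)"
  unfolding psd_def
proof (intro conjI allI)
  have "transpose H = H"
    using assms by (rule psd_symmetric)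
  then show "transpose (block H H H H) = block H H H H"
    by (simp add: vec_eq_iff transpose_def block_def split: sum.split)
  fix \<theta> :: "real^('a + 'a)"
  obtain p q where "\<theta> = bvec p q"
    by (rule bvec_cases)
  then show "0 \<le> \<theta> \<bullet> (block H H H H *v \<theta>)"
    using assms by (simp add: inner_block_all_bvec psd_def)
qed

definition bcol :: "real^'m^'n \<Rightarrow> real^'m^'n \<Rightarrow> real^'m^('n + 'n)" where
  "bcol P Q = (\<chi> i. case i of Inl k \<Rightarrow> P $ k | Inr k \<Rightarrow> Q $ k)"

lemma bcol_nth [simp]: "bcol P Q $ Inl i = P $ i" "bcol P Q $ Inr i = Q $ i"
  by (simp_all add: bcol_def)

lemma bcol_mult_vec: "bcol P Q *v g = bvec (P *v g) (Q *v g)"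
proof -
  have "(bcol P Q *v g) $ i = bvec (P *v g) (Q *v g) $ i" for i
    by (cases i) (simp_all add: matrix_vector_mult_def)
  then show ?thesis
    by (simp add: vec_eq_iff)
qed

lemma bcol_mult_transpose_bcol:
  "bcol P Q ** X ** transpose (bcol R S) =
     block (P ** X ** transpose R) (P ** X ** transpose S) (Q ** X ** transpose R) (Q ** X ** transpose S)"
proof -
  have "(bcol P Q ** X ** transpose (bcol R S)) $ i $ j =
      block (P ** X ** transpose R) (P ** X ** transpose S) (Q ** X ** transpose R) (Q ** X ** transpose S) $ i $ j"
    for i j
    by (cases i; cases j) (simp_all add: matrix_matrix_mult_def transpose_def)
  then show ?thesis
    by (simp add: vec_eq_iff)
qed

lemma outer_mult_vec: "outer a a *v w = (a \<bullet> w) *\<^sub>R (a::real^'n)"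
  by (simp add: vec_eq_iff outer_def matrix_vector_mult_def inner_vec_def sum_distrib_left mult_ac)

lemma uminus_matrix_vector_mult: "(- X) *v (z::real^'n) = - (X *v z)"
  by (simp add: vec_eq_iff matrix_vector_mult_def sum_negf)

definition mean_step_matrix :: "real \<Rightarrow> real \<Rightarrow> real^'d^'d \<Rightarrow> real^('d + 'd)^('d + 'd)" where
  "mean_step_matrix \<alpha> \<beta> H = block (mat 1 - \<beta> *\<^sub>R H) (mat 1 - \<beta> *\<^sub>R H) (- (\<alpha> *\<^sub>R H)) (mat 1 - \<alpha> *\<^sub>R H)"

lemma mean_step_mult_bvec:
  "mean_step_matrix \<alpha> \<beta> H *v bvec p q =
     bvec ((p + q) - \<beta> *\<^sub>R (H *v (p + q))) (q - \<alpha> *\<^sub>R (H *v (p + q)))"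
  unfolding mean_step_matrix_def block_mult_bvec
  by (simp add: matrix_vector_mult_diff_rdistrib uminus_matrix_vector_mult
      scaleR_matrix_vector_assoc[symmetric] algebra_simps matrix_vector_right_distrib)

definition noise_embedding :: "real \<Rightarrow> real \<Rightarrow> real^'d^('d + 'd)" where
  "noise_embedding \<alpha> \<beta> = bcol (\<beta> *\<^sub>R mat 1) (\<alpha> *\<^sub>R mat 1)"

lemma noise_embedding_mult_vec: "noise_embedding \<alpha> \<beta> *v g = bvec (\<beta> *\<^sub>R g) (\<alpha> *\<^sub>R g)"
  by (simp add: noise_embedding_def bcol_mult_vec scaleR_matrix_vector_assoc[symmetric])

definition noise_matrix :: "real \<Rightarrow> real \<Rightarrow> real^'d^'d \<Rightarrow> real^('d + 'd)^('d + 'd)" where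
  "noise_matrix \<alpha> \<beta> H = noise_embedding \<alpha> \<beta> ** H ** transpose (noise_embedding \<alpha> \<beta>)"

lemma noise_matrix_eq_block:
  "noise_matrix \<alpha> \<beta> H = block (\<beta>\<^sup>2 *\<^sub>R H) ((\<alpha> * \<beta>) *\<^sub>R H) ((\<alpha> * \<beta>) *\<^sub>R H) (\<alpha>\<^sup>2 *\<^sub>R H)"
  unfolding noise_matrix_def noise_embedding_def bcol_mult_transpose_bcol
  by (simp add: transpose_scalar matrix_scalar_ac scalar_matrix_assoc[symmetric] power2_eq_square mult.commute)

lemma Jmat_eq_mean_step: "Jmat \<alpha> \<beta> a = mean_step_matrix \<alpha> \<beta> (outer a a)"
  by (simp add: Jmat_def mean_step_matrix_def)

lemma Jmat_mult_bvec:
  "Jmat \<alpha> \<beta> a *v bvec p q =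
     mean_step_matrix \<alpha> \<beta> H *v bvec p q - noise_embedding \<alpha> \<beta> *v ((a \<bullet> (p + q)) *\<^sub>R a - H *v (p + q))"
  unfolding Jmat_eq_mean_step mean_step_mult_bvec noise_embedding_mult_vec outer_mult_vec bvec_diff[symmetric]
  by (simp add: algebra_simps)

lemma Jmat_nth_quadratic: "\<exists>c \<gamma> k l. \<forall>a. Jmat \<alpha> \<beta> a $ i $ j = c - \<gamma> * (a $ k * a $ l)"
proof (cases i; cases j)
  fix i' j' assume "i = Inl i'" "j = Inl j'"
  then show ?thesis
    by (intro exI[of _ "mat 1 $ i' $ j'"] exI[of _ \<beta>] exI[of _ i'] exI[of _ j']) (simp add: Jmat_def outer_def)
next
  fix i' j' assume "i = Inl i'" "j = Inr j'"
  then show ?thesis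
    by (intro exI[of _ "mat 1 $ i' $ j'"] exI[of _ \<beta>] exI[of _ i'] exI[of _ j']) (simp add: Jmat_def outer_def)
next
  fix i' j' assume "i = Inr i'" "j = Inl j'"
  then show ?thesis
    by (intro exI[of _ 0] exI[of _ \<alpha>] exI[of _ i'] exI[of _ j']) (simp add: Jmat_def outer_def)
next
  fix i' j' assume "i = Inr i'" "j = Inr j'"
  then show ?thesis
    by (intro exI[of _ "mat 1 $ i' $ j'"] exI[of _ \<alpha>] exI[of _ i'] exI[of _ j']) (simp add: Jmat_def outer_def)
qed

lemma continuous_Jmat_nth: "continuous_on UNIV (\<lambda>a. Jmat \<alpha> \<beta> a $ i $ j)"
proof -
  obtain c \<gamma> k l where "\<And>a. Jmat \<alpha> \<beta> a $ i $ j = c - \<gamma> * (a $ k * a $ l)"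
    using Jmat_nth_quadratic by blast
  then show ?thesis
    by (simp add: continuous_intros)
qed

lemma continuous_Jmat_mult_vec: "continuous_on UNIV (\<lambda>x. Jmat \<alpha> \<beta> (fst x) *v snd x)"
  unfolding matrix_vector_mult_def
  by (intro continuous_intros continuous_on_compose2[OF continuous_Jmat_nth]) auto

section \<open>The mean iteration\<close>

text \<open>For an eigenvector e of H with eigenvalue \<mu>, the mean iterates started at (0, e) stay in
  the span of (e, 0) and (0, e); mode_iter gives their coordinates, with a = \<alpha> \<mu>
  and b = \<beta> \<mu>.\<close>

primrec mode_iter :: "real \<Rightarrow> real \<Rightarrow> nat \<Rightarrow> real \<times> real" where
  "mode_iter a b 0 = (0, 1)"
| "mode_iter a b (Suc t) = ((1 - b) * (fst (mode_iter a b t) + snd (mode_iter a b t)),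
      snd (mode_iter a b t) - a * (fst (mode_iter a b t) + snd (mode_iter a b t)))"

lemma mode_iter_one: "mode_iter 1 1 (Suc t) = (0, 0)"
  by (induction t) simp_all

lemma mode_iter_potential_le:
  assumes ab: "0 \<le> a" "a \<le> b" "b \<le> 1"
  shows "a * (fst (mode_iter a b t))\<^sup>2 + (1 - a) * (snd (mode_iter a b t))\<^sup>2 \<le> 1 - a"
proof -
  define W where "W t = a * (fst (mode_iter a b t))\<^sup>2 + (1 - a) * (snd (mode_iter a b t))\<^sup>2" for t
  have "W (Suc t) \<le> W t" for t
  proof -
    define u v where "u = fst (mode_iter a b t)" and "v = snd (mode_iter a b t)"
    have "W t - W (Suc t) = a * (a * (u + v) - v)\<^sup>2 + a * ((1 - a) - (1 - b)\<^sup>2) * (u + v)\<^sup>2"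
      unfolding W_def u_def v_def by (simp add: power2_eq_square algebra_simps)
    moreover have "(1 - b) * (1 - b) \<le> (1 - b) * 1"
      using ab by (intro mult_left_mono) auto
    then have "(1 - b)\<^sup>2 \<le> 1 - a"
      using ab by (simp add: power2_eq_square)
    then have "0 \<le> a * (a * (u + v) - v)\<^sup>2 + a * ((1 - a) - (1 - b)\<^sup>2) * (u + v)\<^sup>2"
      using ab by simp
    ultimately show ?thesis
      by linarith
  qed
  then have "W t \<le> W 0"
    by (induction t) (auto intro: order_trans)
  then show ?thesis
    by (simp add: W_def)
qed

lemma mode_iter_bounded:
  assumes ab: "0 \<le> a" "a \<le> b" "b \<le> 1"
  shows "(snd (mode_iter a b t))\<^sup>2 \<le> 1 \<and> a * (fst (mode_iter a b t) + snd (mode_iter a b t))\<^sup>2 \<le> 1"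
proof (cases "a < 1")
  case True
  define u v where "u = fst (mode_iter a b t)" and "v = snd (mode_iter a b t)"
  have W: "a * u\<^sup>2 + (1 - a) * v\<^sup>2 \<le> 1 - a"
    unfolding u_def v_def by (rule mode_iter_potential_le[OF ab])
  then have "(1 - a) * v\<^sup>2 \<le> (1 - a) * 1"
    using ab by (smt (verit) mult_nonneg_nonneg zero_le_power2)
  moreover have "a * u\<^sup>2 + (1 - a) * v\<^sup>2 = (1 - a) * (a * (u + v)\<^sup>2) + (a * u - (1 - a) * v)\<^sup>2"
    by (simp add: power2_eq_square algebra_simps)
  then have "(1 - a) * (a * (u + v)\<^sup>2) \<le> (1 - a) * 1"
    using W by (smt (verit) zero_le_power2)
  ultimately show ?thesis
    using True unfolding u_def v_def by simp
next
  case False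
  then have "a = 1" "b = 1"
    using ab by auto
  then show ?thesis
    by (cases t) (simp_all add: mode_iter_one del: mode_iter.simps(2))
qed

lemma mode_iter_sum_bound:
  assumes ab: "0 \<le> a" "a \<le> b" "b \<le> 1"
  shows "b * (fst (mode_iter a b t) + snd (mode_iter a b t))\<^sup>2 \<le> real t + 1"
proof -
  define w where "w t = fst (mode_iter a b t) + snd (mode_iter a b t)" for t
  define S where "S t = (\<Sum>i\<le>t. (1 - b) ^ i)" for t
  have "\<bar>w t\<bar> \<le> S t" for t
  proof (induction t)
    case (Suc t)
    have "\<bar>snd (mode_iter a b (Suc t))\<bar> \<le> 1"
      using mode_iter_bounded[OF ab, of "Suc t"] by (simp only: abs_square_le_1)
    moreover have "\<bar>(1 - b) * w t\<bar> \<le> (1 - b) * S t"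
      using Suc ab by (simp add: abs_mult mult_left_mono)
    moreover have "w (Suc t) = (1 - b) * w t + snd (mode_iter a b (Suc t))"
      by (simp add: w_def)
    moreover have "S (Suc t) = 1 + (1 - b) * S t"
      unfolding S_def by (simp add: sum.atMost_Suc_shift sum_distrib_left del: sum.atMost_Suc)
    ultimately show ?case
      by linarith
  qed (simp add: w_def S_def)
  moreover have "0 \<le> S t"
    using ab unfolding S_def by (simp add: sum_nonneg)
  moreover have "b * S t \<le> 1"
    using sum_gp_basic[of "1 - b" t] ab unfolding S_def by simp
  moreover have "S t \<le> real t + 1"
    using sum_mono[of "{..t}" "\<lambda>i. (1 - b) ^ i" "\<lambda>_. 1"] ab unfolding S_def by (simp add: power_le_one)
  ultimately have "(w t)\<^sup>2 \<le> (S t)\<^sup>2" "b * S t * S t \<le> S t" "S t \<le> real t + 1"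
    using power_mono[of "\<bar>w t\<bar>" "S t" 2] mult_right_mono[of "b * S t" 1 "S t"] by simp_all
  then have "b * (w t)\<^sup>2 \<le> real t + 1"
    using ab mult_left_mono[of "(w t)\<^sup>2" "(S t)\<^sup>2" b] by (simp add: power2_eq_square mult.assoc)
  then show ?thesis
    by (simp add: w_def)
qed

lemma mode_energy_bound:
  assumes "0 \<le> \<mu>" "\<beta> * \<mu> \<le> 1" "0 < \<alpha>" "\<alpha> \<le> \<beta>"
  shows "\<mu> * (fst (mode_iter (\<alpha> * \<mu>) (\<beta> * \<mu>) t) + snd (mode_iter (\<alpha> * \<mu>) (\<beta> * \<mu>) t))\<^sup>2
           \<le> min (1 / \<alpha>) ((real t + 1) / \<beta>)"
proof -
  have ab: "0 \<le> \<alpha> * \<mu>" "\<alpha> * \<mu> \<le> \<beta> * \<mu>" "\<beta> * \<mu> \<le> 1"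
    using assms by (simp_all add: mult_right_mono)
  show ?thesis
    using mode_iter_bounded[OF ab, of t] mode_iter_sum_bound[OF ab, of t] assms
    by (simp add: le_divide_eq mult_ac)
qed

lemma mean_step_power_eigenvector:
  assumes he: "H *v e = \<mu> *\<^sub>R e"
  shows "mpow (mean_step_matrix \<alpha> \<beta> H) t *v bvec 0 e =
    bvec (fst (mode_iter (\<alpha> * \<mu>) (\<beta> * \<mu>) t) *\<^sub>R e) (snd (mode_iter (\<alpha> * \<mu>) (\<beta> * \<mu>) t) *\<^sub>R e)"
proof (induction t)
  case (Suc t)
  have "mpow (mean_step_matrix \<alpha> \<beta> H) (Suc t) *v bvec 0 e =
      mean_step_matrix \<alpha> \<beta> H *v (mpow (mean_step_matrix \<alpha> \<beta> H) t *v bvec 0 e)"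
    by (simp add: matrix_vector_mul_assoc)
  then show ?case
    unfolding Suc mean_step_mult_bvec
    by (simp add: matrix_vector_mult_scaleR he algebra_simps flip: scaleR_add_left)
qed simp

lemma orthonormal_inner_sum:
  fixes B :: "'a::real_inner set"
  assumes "finite B" "pairwise orthogonal B" "\<And>e. e \<in> B \<Longrightarrow> norm e = 1"
  shows "(\<Sum>e\<in>B. f e *\<^sub>R e) \<bullet> (\<Sum>e\<in>B. g e *\<^sub>R e) = (\<Sum>e\<in>B. f e * g e)"
proof -
  have "e \<bullet> (\<Sum>e'\<in>B. g e' *\<^sub>R e') = g e" if "e \<in> B" for e
  proof -
    have "e \<bullet> (\<Sum>e'\<in>B. g e' *\<^sub>R e') = (\<Sum>e'\<in>B. if e' = e then g e else 0)"
      unfolding inner_sum_right inner_scaleR_right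
      using assms(2,3) that by (intro sum.cong) (auto simp: pairwise_def orthogonal_def norm_eq_1)
    then show ?thesis
      using assms(1) that by simp
  qed
  then show ?thesis
    unfolding inner_sum_left inner_scaleR_left by simp
qed

lemma mean_step_power_eigenbasis:
  assumes B: "finite B" and he: "\<And>e. e \<in> B \<Longrightarrow> H *v e = \<mu> e *\<^sub>R e"
  shows "mpow (mean_step_matrix \<alpha> \<beta> H) t *v bvec 0 (\<Sum>e\<in>B. c e *\<^sub>R e) =
    bvec (\<Sum>e\<in>B. (c e * fst (mode_iter (\<alpha> * \<mu> e) (\<beta> * \<mu> e) t)) *\<^sub>R e)
         (\<Sum>e\<in>B. (c e * snd (mode_iter (\<alpha> * \<mu> e) (\<beta> * \<mu> e) t)) *\<^sub>R e)"
proof -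
  have "bvec 0 (\<Sum>e\<in>B. c e *\<^sub>R e) = (\<Sum>e\<in>B. c e *\<^sub>R bvec 0 e)"
    using bvec_sum[OF B, of "\<lambda>e. c e *\<^sub>R 0" "\<lambda>e. c e *\<^sub>R e"] by (simp add: bvec_scaleR[symmetric])
  then have "mpow (mean_step_matrix \<alpha> \<beta> H) t *v bvec 0 (\<Sum>e\<in>B. c e *\<^sub>R e)
      = (\<Sum>e\<in>B. c e *\<^sub>R (mpow (mean_step_matrix \<alpha> \<beta> H) t *v bvec 0 e))"
    using B by (simp add: linear_sum[OF matrix_vector_mul_linear] matrix_vector_mult_scaleR)
  also have "\<dots> = (\<Sum>e\<in>B. c e *\<^sub>R bvec (fst (mode_iter (\<alpha> * \<mu> e) (\<beta> * \<mu> e) t) *\<^sub>R e)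
                                        (snd (mode_iter (\<alpha> * \<mu> e) (\<beta> * \<mu> e) t) *\<^sub>R e))"
    using he by (intro sum.cong refl) (simp add: mean_step_power_eigenvector)
  finally show ?thesis
    using B by (simp add: bvec_sum bvec_scaleR[symmetric])
qed

lemma orthonormal_eigenbasis_quadratic:
  fixes H :: "real^'n^'n"
  assumes B: "finite B" "pairwise orthogonal B" "\<And>e. e \<in> B \<Longrightarrow> norm e = 1"
    and he: "\<And>e. e \<in> B \<Longrightarrow> H *v e = \<mu> e *\<^sub>R e"
  shows "(\<Sum>e\<in>B. d e *\<^sub>R e) \<bullet> (H *v (\<Sum>e\<in>B. d e *\<^sub>R e)) = (\<Sum>e\<in>B. \<mu> e * (d e)\<^sup>2)"
proof -
  have "H *v (\<Sum>e\<in>B. d e *\<^sub>R e) = (\<Sum>e\<in>B. d e *\<^sub>R (H *v e))"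
    using B(1) by (simp add: linear_sum[OF matrix_vector_mul_linear] matrix_vector_mult_scaleR)
  also have "\<dots> = (\<Sum>e\<in>B. (d e * \<mu> e) *\<^sub>R e)"
    using he by (intro sum.cong refl) simp
  finally show ?thesis
    using orthonormal_inner_sum[OF B] by (simp add: power2_eq_square mult_ac)
qed

lemma mean_bias_bound:
  fixes H :: "real^'d^'d"
  assumes psd: "psd H" and eig: "\<And>\<mu> v. v \<noteq> 0 \<Longrightarrow> H *v v = \<mu> *\<^sub>R v \<Longrightarrow> \<beta> * \<mu> \<le> 1"
    and step: "0 < \<alpha>" "\<alpha> \<le> \<beta>"
  shows "(mpow (mean_step_matrix \<alpha> \<beta> H) T *v bvec 0 x) \<bullet> (block H H H H *v (mpow (mean_step_matrix \<alpha> \<beta> H) T *v bvec 0 x))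
     \<le> min (1 / \<alpha>) ((real T + 1) / \<beta>) * (norm x)\<^sup>2"
proof -
  obtain B where B: "finite B" "pairwise orthogonal B" "\<And>e. e \<in> B \<Longrightarrow> norm e = 1"
    "\<And>e. e \<in> B \<Longrightarrow> \<exists>\<mu>. H *v e = \<mu> *\<^sub>R e" "\<And>x. x = (\<Sum>e\<in>B. (x \<bullet> e) *\<^sub>R e)"
    using symmetric_matrix_eigenbasis[OF psd_symmetric[OF psd]] by blast
  obtain \<mu> where he: "\<And>e. e \<in> B \<Longrightarrow> H *v e = \<mu> e *\<^sub>R e"
    using B(4) by metis
  define K where "K = min (1 / \<alpha>) ((real T + 1) / \<beta>)"
  define c where "c e = x \<bullet> e" for e
  define w where "w e = fst (mode_iter (\<alpha> * \<mu> e) (\<beta> * \<mu> e) T) + snd (mode_iter (\<alpha> * \<mu> e) (\<beta> * \<mu> e) T)" for e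
  have mode: "\<mu> e * (w e)\<^sup>2 \<le> K" if "e \<in> B" for e
  proof -
    have "e \<bullet> e = 1"
      using B(3)[OF that] by (simp add: norm_eq_1)
    then have "0 \<le> \<mu> e"
      using psd he[OF that] by (simp add: psd_def) (metis inner_scaleR_right mult.right_neutral)
    moreover have "\<beta> * \<mu> e \<le> 1"
      using eig[of e "\<mu> e"] he[OF that] B(3)[OF that] by fastforce
    ultimately show ?thesis
      unfolding K_def w_def using mode_energy_bound step by blast
  qed
  have x: "x = (\<Sum>e\<in>B. c e *\<^sub>R e)"
    using B(5) by (simp add: c_def)
  have "mpow (mean_step_matrix \<alpha> \<beta> H) T *v bvec 0 x =
      bvec (\<Sum>e\<in>B. (c e * fst (mode_iter (\<alpha> * \<mu> e) (\<beta> * \<mu> e) T)) *\<^sub>R e)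
           (\<Sum>e\<in>B. (c e * snd (mode_iter (\<alpha> * \<mu> e) (\<beta> * \<mu> e) T)) *\<^sub>R e)"
    by (subst x) (rule mean_step_power_eigenbasis[OF B(1) he])
  then have "(mpow (mean_step_matrix \<alpha> \<beta> H) T *v bvec 0 x) \<bullet>
        (block H H H H *v (mpow (mean_step_matrix \<alpha> \<beta> H) T *v bvec 0 x))
      = (\<Sum>e\<in>B. (c e * w e) *\<^sub>R e) \<bullet> (H *v (\<Sum>e\<in>B. (c e * w e) *\<^sub>R e))"
    by (simp add: w_def inner_block_all_bvec sum.distrib[symmetric] scaleR_add_left distrib_left)
  also have "\<dots> = (\<Sum>e\<in>B. (c e)\<^sup>2 * (\<mu> e * (w e)\<^sup>2))"
    using orthonormal_eigenbasis_quadratic[OF B(1-3) he, of "\<lambda>e. c e * w e"]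
    by (simp add: power_mult_distrib mult_ac)
  also have "\<dots> \<le> (\<Sum>e\<in>B. (c e)\<^sup>2 * K)"
    using mode by (intro sum_mono mult_left_mono) auto
  also have "\<dots> = K * (\<Sum>e\<in>B. c e * c e)"
    by (simp add: sum_distrib_left power2_eq_square mult_ac)
  also have "(\<Sum>e\<in>B. c e * c e) = x \<bullet> x"
    using orthonormal_inner_sum[OF B(1-3), of c c] x by simp
  finally show ?thesis
    by (simp add: K_def power2_norm_eq_inner)
qed

section \<open>Moments of the feature distribution\<close>

lemma integrable_vec:
  fixes f :: "'a \<Rightarrow> 'b::euclidean_space^'n"
  assumes "f \<in> borel_measurable M" and "\<And>i. integrable M (\<lambda>x. f x $ i)"
  shows "integrable M f"
proof (rule Bochner_Integration.integrable_bound[OF _ assms(1)])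
  show "integrable M (\<lambda>x. \<Sum>i\<in>UNIV. norm (f x $ i))"
    using assms(2) by auto
  have le: "norm (f x) \<le> (\<Sum>i\<in>UNIV. norm (f x $ i))" for x
    unfolding norm_vec_def by (rule L2_set_le_sum) auto
  show "AE x in M. norm (f x) \<le> norm (\<Sum>i\<in>UNIV. norm (f x $ i))"
    by (intro AE_I2 order_trans[OF le]) simp
qed

lemma
  fixes f :: "'a \<Rightarrow> real^'n^'m"
  assumes "integrable M f"
  shows integrable_mat_nth: "integrable M (\<lambda>x. f x $ i $ j)"
    and integral_mat_nth: "integral\<^sup>L M f $ i $ j = (\<integral>x. f x $ i $ j \<partial>M)"
proof -
  have "integrable M (\<lambda>x. f x $ i)"
    by (rule integrable_bounded_linear[OF bounded_linear_vec_nth assms])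
  then show "integrable M (\<lambda>x. f x $ i $ j)"
    by (rule integrable_bounded_linear[OF bounded_linear_vec_nth])
  show "integral\<^sup>L M f $ i $ j = (\<integral>x. f x $ i $ j \<partial>M)"
    using integral_bounded_linear[OF bounded_linear_vec_nth] assms \<open>integrable M (\<lambda>x. f x $ i)\<close>
    by metis
qed

lemma integrable_matI:
  fixes f :: "'a \<Rightarrow> real^'n^'m"
  assumes "f \<in> borel_measurable M" and "\<And>i j. integrable M (\<lambda>x. f x $ i $ j)"
  shows "integrable M f"
proof (rule integrable_vec[OF assms(1)])
  fix i
  have "(\<lambda>x. f x $ i) \<in> borel_measurable M"
    using assms(1) by (rule borel_measurable_continuous_on[rotated]) (intro continuous_intros)
  then show "integrable M (\<lambda>x. f x $ i)"
    using assms(2) by (rule integrable_vec)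
qed

lemma
  fixes f :: "'k::finite \<Rightarrow> 'l::finite \<Rightarrow> 'a \<Rightarrow> real"
  assumes "\<And>k l. integrable M (f k l)"
  shows integrable_double_sum: "integrable M (\<lambda>x. \<Sum>k\<in>UNIV. \<Sum>l\<in>UNIV. f k l x * c k l)"
    and integral_double_sum:
      "(\<integral>x. (\<Sum>k\<in>UNIV. \<Sum>l\<in>UNIV. f k l x * c k l) \<partial>M) = (\<Sum>k\<in>UNIV. \<Sum>l\<in>UNIV. (\<integral>x. f k l x \<partial>M) * c k l)"
  using assms by simp_all

locale feature_distribution =
  fixes \<rho> :: "((real^'d) \<times> real) measure" and H :: "real^'d^'d" and \<kappa> :: real
  assumes prob: "prob_space \<rho>"
    and sets_rho: "sets \<rho> = sets borel"
    and second_moment: "integrable \<rho> (\<lambda>(a, b). (norm a)\<^sup>2)"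
    and H_def: "H = (\<integral>z. outer (fst z) (fst z) \<partial>\<rho>)"
    and fourth_moment: "\<And>M::real^'d^'d. psd M \<Longrightarrow>
         integrable \<rho> (\<lambda>z. (fst z \<bullet> (M *v fst z)) *\<^sub>R outer (fst z) (fst z)) \<and>
         loewner_le (\<integral>z. (fst z \<bullet> (M *v fst z)) *\<^sub>R outer (fst z) (fst z) \<partial>\<rho>)
                    ((\<kappa> * mtrace (M ** H)) *\<^sub>R H)"
begin

sublocale prob_space \<rho>
  by (rule prob)

lemma continuous_borel_measurable: "continuous_on UNIV f \<Longrightarrow> f \<in> borel_measurable \<rho>"
  using borel_measurable_continuous_onI measurable_cong_sets[OF sets_rho refl] by blast

lemma integrable_norm_power4: "integrable \<rho> (\<lambda>z. (norm (fst z)) ^ 4)"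
proof -
  let ?G = "\<lambda>z. (fst z \<bullet> (mat 1 *v fst z)) *\<^sub>R outer (fst z) (fst z)"
  have "integrable \<rho> ?G"
    using fourth_moment[of "mat 1"] by (simp add: psd_def)
  then have int: "integrable \<rho> (\<lambda>z. \<Sum>i\<in>UNIV. ?G z $ i $ i)"
    by (intro Bochner_Integration.integrable_sum integrable_mat_nth)
  have trace: "(\<Sum>i\<in>UNIV. ?G z $ i $ i) = (norm (fst z)) ^ 4" for z
  proof -
    have "(\<Sum>i\<in>UNIV. ?G z $ i $ i) = (fst z \<bullet> fst z) * (\<Sum>i\<in>UNIV. fst z $ i * fst z $ i)"
      by (simp add: outer_def sum_distrib_left)
    also have "\<dots> = (fst z \<bullet> fst z) * (fst z \<bullet> fst z)"
      by (simp add: inner_vec_def)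
    also have "\<dots> = (norm (fst z)) ^ 4"
      by (simp add: power2_norm_eq_inner[symmetric] power4_eq_xxxx power2_eq_square)
    finally show ?thesis .
  qed
  then show ?thesis
    using int by (simp only: trace)
qed

lemma integrable_feature_prod2: "integrable \<rho> (\<lambda>z. fst z $ i * fst z $ j)"
proof (rule Bochner_Integration.integrable_bound)
  have "(\<lambda>z. (norm (fst z))\<^sup>2) = (\<lambda>(a::real^'d, b::real). (norm a)\<^sup>2)"
    by auto
  then show "integrable \<rho> (\<lambda>z. (norm (fst z))\<^sup>2)"
    using second_moment by simp
  show "(\<lambda>z. fst z $ i * fst z $ j) \<in> borel_measurable \<rho>"
    by (intro continuous_borel_measurable continuous_intros)
  show "AE z in \<rho>. norm (fst z $ i * fst z $ j) \<le> norm ((norm (fst z))\<^sup>2)"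
    by (intro AE_I2) (simp add: abs_mult power2_eq_square mult_mono component_le_norm_cart)
qed

lemma integrable_feature_prod4: "integrable \<rho> (\<lambda>z. fst z $ i * fst z $ j * fst z $ k * fst z $ l)"
proof (rule Bochner_Integration.integrable_bound[OF integrable_norm_power4])
  show "(\<lambda>z. fst z $ i * fst z $ j * fst z $ k * fst z $ l) \<in> borel_measurable \<rho>"
    by (intro continuous_borel_measurable continuous_intros)
  show "AE z in \<rho>. norm (fst z $ i * fst z $ j * fst z $ k * fst z $ l) \<le> norm ((norm (fst z)) ^ 4)"
    by (intro AE_I2) (simp add: abs_mult power4_eq_xxxx mult_mono component_le_norm_cart)
qed

lemma H_nth: "H $ i $ j = (\<integral>z. fst z $ i * fst z $ j \<partial>\<rho>)"
proof -
  have "integrable \<rho> (\<lambda>z. outer (fst z) (fst z))"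
    by (rule integrable_matI)
      (auto simp: outer_def integrable_feature_prod2 intro!: continuous_borel_measurable continuous_intros)
  then show ?thesis
    unfolding H_def by (simp add: integral_mat_nth outer_def)
qed

lemma inner_feature_expand:
  "(a \<bullet> w) * (a \<bullet> v) = (\<Sum>k\<in>UNIV. \<Sum>l\<in>UNIV. (w $ k * v $ l) * (a $ k * a $ l))" for a w v :: "real^'d"
  unfolding inner_vec_def sum_product by (simp add: mult_ac)

lemma integrable_inner_feature: "integrable \<rho> (\<lambda>z. (fst z \<bullet> w) * (fst z \<bullet> v))"
  unfolding inner_feature_expand by (simp add: integrable_feature_prod2)

lemma integral_inner_feature: "(\<integral>z. (fst z \<bullet> w) * (fst z \<bullet> v) \<partial>\<rho>) = w \<bullet> (H *v v)"
  unfolding inner_feature_expand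
  by (simp add: integrable_feature_prod2 H_nth[symmetric] inner_vec_def matrix_vector_mult_def
      sum_distrib_left mult_ac)

lemma psd_H: "psd H"
  unfolding psd_def
proof (intro conjI allI)
  show "transpose H = H"
    by (simp add: vec_eq_iff transpose_def H_nth mult.commute)
  show "0 \<le> v \<bullet> (H *v v)" for v
    using integral_inner_feature[of v v, symmetric] by simp
qed

lemma fourth_moment_bound:
  assumes "psd Y"
  shows "integrable \<rho> (\<lambda>z. (fst z \<bullet> (Y *v fst z)) * (fst z \<bullet> w)\<^sup>2)"
    and "(\<integral>z. (fst z \<bullet> (Y *v fst z)) * (fst z \<bullet> w)\<^sup>2 \<partial>\<rho>) \<le> \<kappa> * mtrace (Y ** H) * (w \<bullet> (H *v w))"
proof -
  let ?G = "\<lambda>z. (fst z \<bullet> (Y *v fst z)) *\<^sub>R outer (fst z) (fst z)"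
  have G: "integrable \<rho> ?G" and le: "loewner_le (\<integral>z. ?G z \<partial>\<rho>) ((\<kappa> * mtrace (Y ** H)) *\<^sub>R H)"
    using fourth_moment[OF assms] by blast+
  have expand: "(fst z \<bullet> (Y *v fst z)) * (fst z \<bullet> w)\<^sup>2 = (\<Sum>k\<in>UNIV. \<Sum>l\<in>UNIV. ?G z $ k $ l * (w $ k * w $ l))"
    for z
    unfolding inner_mult_vec_eq_sum[symmetric]
    by (simp add: scaleR_matrix_vector_assoc[symmetric] outer_mult_vec power2_eq_square inner_commute)
  have entries: "integrable \<rho> (\<lambda>z. ?G z $ k $ l)" for k l
    using G by (rule integrable_mat_nth)
  show "integrable \<rho> (\<lambda>z. (fst z \<bullet> (Y *v fst z)) * (fst z \<bullet> w)\<^sup>2)"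
    unfolding expand using entries by (rule integrable_double_sum)
  have "(\<integral>z. (fst z \<bullet> (Y *v fst z)) * (fst z \<bullet> w)\<^sup>2 \<partial>\<rho>)
      = (\<Sum>k\<in>UNIV. \<Sum>l\<in>UNIV. (\<integral>z. ?G z $ k $ l \<partial>\<rho>) * (w $ k * w $ l))"
    unfolding expand using entries by (rule integral_double_sum)
  also have "\<dots> = w \<bullet> ((\<integral>z. ?G z \<partial>\<rho>) *v w)"
    using inner_mult_vec_eq_sum[of w "\<integral>z. ?G z \<partial>\<rho>"] by (simp only: integral_mat_nth[OF G])
  also have "\<dots> \<le> w \<bullet> (((\<kappa> * mtrace (Y ** H)) *\<^sub>R H) *v w)"
    using le unfolding loewner_le_def psd_def by (simp add: matrix_vector_mult_diff_rdistrib inner_diff_right)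
  finally show "(\<integral>z. (fst z \<bullet> (Y *v fst z)) * (fst z \<bullet> w)\<^sup>2 \<partial>\<rho>) \<le> \<kappa> * mtrace (Y ** H) * (w \<bullet> (H *v w))"
    by (simp add: scaleR_matrix_vector_assoc[symmetric])
qed

lemma centered_feature_inner:
  shows "integrable \<rho> (\<lambda>z. ((fst z \<bullet> w) *\<^sub>R fst z - H *v w) \<bullet> c)"
    and "(\<integral>z. ((fst z \<bullet> w) *\<^sub>R fst z - H *v w) \<bullet> c \<partial>\<rho>) = 0"
proof -
  have expand: "((a \<bullet> w) *\<^sub>R a - H *v w) \<bullet> c = (a \<bullet> w) * (a \<bullet> c) - (H *v w) \<bullet> c" for a
    by (simp add: inner_diff_left)
  show "integrable \<rho> (\<lambda>z. ((fst z \<bullet> w) *\<^sub>R fst z - H *v w) \<bullet> c)"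
    unfolding expand by (simp add: integrable_inner_feature)
  show "(\<integral>z. ((fst z \<bullet> w) *\<^sub>R fst z - H *v w) \<bullet> c \<partial>\<rho>) = 0"
    unfolding expand
    using symmetric_inner_mult_vec[OF psd_symmetric[OF psd_H], of w c]
    by (simp add: integrable_inner_feature integral_inner_feature prob_space)
qed

lemma centered_feature_quadratic:
  assumes Y: "psd Y"
  shows "integrable \<rho> (\<lambda>z. ((fst z \<bullet> w) *\<^sub>R fst z - H *v w) \<bullet> (Y *v ((fst z \<bullet> w) *\<^sub>R fst z - H *v w)))"
    and "(\<integral>z. ((fst z \<bullet> w) *\<^sub>R fst z - H *v w) \<bullet> (Y *v ((fst z \<bullet> w) *\<^sub>R fst z - H *v w)) \<partial>\<rho>)
           \<le> \<kappa> * mtrace (Y ** H) * (w \<bullet> (H *v w))"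
proof -
  define h where "h = H *v w"
  have expand: "((a \<bullet> w) *\<^sub>R a - h) \<bullet> (Y *v ((a \<bullet> w) *\<^sub>R a - h)) =
      (a \<bullet> (Y *v a)) * (a \<bullet> w)\<^sup>2 - 2 * ((a \<bullet> w) * (a \<bullet> (Y *v h))) + h \<bullet> (Y *v h)" for a
  proof -
    have "h \<bullet> (Y *v a) = a \<bullet> (Y *v h)"
      using symmetric_inner_mult_vec[OF psd_symmetric[OF Y], of a h] by (simp add: inner_commute)
    then show ?thesis
      by (simp add: matrix_vector_mult_diff_distrib matrix_vector_mult_scaleR inner_diff_left
          inner_diff_right power2_eq_square algebra_simps)
  qed
  have ints: "integrable \<rho> (\<lambda>z. (fst z \<bullet> (Y *v fst z)) * (fst z \<bullet> w)\<^sup>2)"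
      "integrable \<rho> (\<lambda>z. (fst z \<bullet> w) * (fst z \<bullet> (Y *v h)))"
    using fourth_moment_bound(1)[OF Y] integrable_inner_feature by blast+
  then show "integrable \<rho> (\<lambda>z. ((fst z \<bullet> w) *\<^sub>R fst z - H *v w) \<bullet> (Y *v ((fst z \<bullet> w) *\<^sub>R fst z - H *v w)))"
    unfolding h_def[symmetric] expand by simp
  have "w \<bullet> (H *v (Y *v h)) = h \<bullet> (Y *v h)"
    unfolding h_def by (simp add: symmetric_inner_mult_vec[OF psd_symmetric[OF psd_H], symmetric])
  then have "(\<integral>z. ((fst z \<bullet> w) *\<^sub>R fst z - h) \<bullet> (Y *v ((fst z \<bullet> w) *\<^sub>R fst z - h)) \<partial>\<rho>)
      = (\<integral>z. (fst z \<bullet> (Y *v fst z)) * (fst z \<bullet> w)\<^sup>2 \<partial>\<rho>) - h \<bullet> (Y *v h)"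
    unfolding expand using ints by (simp add: integral_inner_feature prob_space)
  also have "\<dots> \<le> \<kappa> * mtrace (Y ** H) * (w \<bullet> (H *v w))"
    using fourth_moment_bound(2)[OF Y, of w] Y unfolding psd_def by (smt (verit))
  finally show "(\<integral>z. ((fst z \<bullet> w) *\<^sub>R fst z - H *v w) \<bullet> (Y *v ((fst z \<bullet> w) *\<^sub>R fst z - H *v w)) \<partial>\<rho>)
           \<le> \<kappa> * mtrace (Y ** H) * (w \<bullet> (H *v w))"
    unfolding h_def .
qed

lemma expected_step_quadratic:
  fixes B :: "real^('d + 'd)^('d + 'd)"
  assumes B: "psd B"
  shows "integrable \<rho> (\<lambda>z. (Jmat \<alpha> \<beta> (fst z) *v \<theta>) \<bullet> (B *v (Jmat \<alpha> \<beta> (fst z) *v \<theta>)))"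
    and "(\<integral>z. (Jmat \<alpha> \<beta> (fst z) *v \<theta>) \<bullet> (B *v (Jmat \<alpha> \<beta> (fst z) *v \<theta>)) \<partial>\<rho>)
         \<le> \<theta> \<bullet> ((transpose (mean_step_matrix \<alpha> \<beta> H) ** B ** mean_step_matrix \<alpha> \<beta> H) *v \<theta>)
           + \<kappa> * tr_inner B (noise_matrix \<alpha> \<beta> H) * (\<theta> \<bullet> (block H H H H *v \<theta>))"
proof -
  obtain p q where \<theta>: "\<theta> = bvec p q"
    by (rule bvec_cases)
  define E :: "real^'d^('d + 'd)" where "E = noise_embedding \<alpha> \<beta>"
  define x where "x = mean_step_matrix \<alpha> \<beta> H *v \<theta>"
  define g where "g a = (a \<bullet> (p + q)) *\<^sub>R a - H *v (p + q)" for a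
  have Y: "psd (transpose E ** B ** E)"
    using B by (rule psd_congruence)
  have pointwise: "(Jmat \<alpha> \<beta> a *v \<theta>) \<bullet> (B *v (Jmat \<alpha> \<beta> a *v \<theta>)) =
      x \<bullet> (B *v x) - 2 * (g a \<bullet> (transpose E *v (B *v x))) + g a \<bullet> ((transpose E ** B ** E) *v g a)" for a
    unfolding \<theta> Jmat_mult_bvec[where H = H] inner_diff_quadratic[OF psd_symmetric[OF B]]
    by (simp only: x_def \<theta> E_def g_def)
  show "integrable \<rho> (\<lambda>z. (Jmat \<alpha> \<beta> (fst z) *v \<theta>) \<bullet> (B *v (Jmat \<alpha> \<beta> (fst z) *v \<theta>)))"
    unfolding pointwise g_def using centered_feature_inner(1) centered_feature_quadratic(1)[OF Y] by simp
  have "(\<integral>z. (Jmat \<alpha> \<beta> (fst z) *v \<theta>) \<bullet> (B *v (Jmat \<alpha> \<beta> (fst z) *v \<theta>)) \<partial>\<rho>)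
      = x \<bullet> (B *v x) + (\<integral>z. g (fst z) \<bullet> ((transpose E ** B ** E) *v g (fst z)) \<partial>\<rho>)"
    unfolding pointwise g_def
    using centered_feature_inner centered_feature_quadratic(1)[OF Y] by (simp add: prob_space)
  also have "\<dots> \<le> x \<bullet> (B *v x) + \<kappa> * mtrace ((transpose E ** B ** E) ** H) * ((p + q) \<bullet> (H *v (p + q)))"
    unfolding g_def using centered_feature_quadratic(2)[OF Y] by simp
  also have "\<dots> = \<theta> \<bullet> ((transpose (mean_step_matrix \<alpha> \<beta> H) ** B ** mean_step_matrix \<alpha> \<beta> H) *v \<theta>)
           + \<kappa> * tr_inner B (noise_matrix \<alpha> \<beta> H) * (\<theta> \<bullet> (block H H H H *v \<theta>))"
    unfolding x_def \<theta> inner_congruence mtrace_congruence_mult psd_symmetric[OF B] inner_block_all_bvec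
    by (simp add: noise_matrix_def E_def)
  finally show "(\<integral>z. (Jmat \<alpha> \<beta> (fst z) *v \<theta>) \<bullet> (B *v (Jmat \<alpha> \<beta> (fst z) *v \<theta>)) \<partial>\<rho>)
         \<le> \<theta> \<bullet> ((transpose (mean_step_matrix \<alpha> \<beta> H) ** B ** mean_step_matrix \<alpha> \<beta> H) *v \<theta>)
           + \<kappa> * tr_inner B (noise_matrix \<alpha> \<beta> H) * (\<theta> \<bullet> (block H H H H *v \<theta>))" .
qed

lemma integrable_Jmat_nth_prod:
  "integrable \<rho> (\<lambda>z. Jmat \<alpha> \<beta> (fst z) $ i $ k * Jmat \<alpha> \<beta> (fst z) $ j $ l)"
proof -
  obtain c \<gamma> k' l' where 1: "\<And>a. Jmat \<alpha> \<beta> a $ i $ k = c - \<gamma> * (a $ k' * a $ l')"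
    using Jmat_nth_quadratic by blast
  obtain c' \<gamma>' k'' l'' where 2: "\<And>a. Jmat \<alpha> \<beta> a $ j $ l = c' - \<gamma>' * (a $ k'' * a $ l'')"
    using Jmat_nth_quadratic by blast
  have expand: "Jmat \<alpha> \<beta> a $ i $ k * Jmat \<alpha> \<beta> a $ j $ l = c * c' - (c * \<gamma>') * (a $ k'' * a $ l'')
      - (\<gamma> * c') * (a $ k' * a $ l') + (\<gamma> * \<gamma>') * (a $ k' * a $ l' * a $ k'' * a $ l'')" for a
    unfolding 1 2 by (simp add: algebra_simps)
  show ?thesis
    unfolding expand
    by (intro Bochner_Integration.integrable_add Bochner_Integration.integrable_diff integrable_mult_right
        integrable_feature_prod2 integrable_feature_prod4 integrable_const)
qed

lemma integrable_Jmat_congruence_nth: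
  "integrable \<rho> (\<lambda>z. (transpose (Jmat \<alpha> \<beta> (fst z)) ** B ** Jmat \<alpha> \<beta> (fst z)) $ k $ l)"
  and borel_measurable_Jmat_congruence_nth:
  "(\<lambda>z. (transpose (Jmat \<alpha> \<beta> (fst z)) ** B ** Jmat \<alpha> \<beta> (fst z)) $ k $ l) \<in> borel_measurable \<rho>"
proof -
  have expand: "(transpose (Jmat \<alpha> \<beta> a) ** B ** Jmat \<alpha> \<beta> a) $ k $ l =
      (\<Sum>j\<in>UNIV. \<Sum>i\<in>UNIV. (Jmat \<alpha> \<beta> a $ i $ k * Jmat \<alpha> \<beta> a $ j $ l) * B $ i $ j)" for a
    by (simp add: matrix_matrix_mult_def transpose_def sum_distrib_left sum_distrib_right mult_ac)
  show "integrable \<rho> (\<lambda>z. (transpose (Jmat \<alpha> \<beta> (fst z)) ** B ** Jmat \<alpha> \<beta> (fst z)) $ k $ l)"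
    unfolding expand by (intro integrable_double_sum integrable_Jmat_nth_prod)
  show "(\<lambda>z. (transpose (Jmat \<alpha> \<beta> (fst z)) ** B ** Jmat \<alpha> \<beta> (fst z)) $ k $ l) \<in> borel_measurable \<rho>"
    unfolding expand
    by (intro continuous_borel_measurable continuous_intros
        continuous_on_compose2[OF continuous_Jmat_nth continuous_on_fst]) auto
qed

lemma integral_Jmat_quadratic:
  "(\<integral>z. (Jmat \<alpha> \<beta> (fst z) *v v) \<bullet> (B *v (Jmat \<alpha> \<beta> (fst z) *v v)) \<partial>\<rho>) =
    (\<Sum>k\<in>UNIV. \<Sum>l\<in>UNIV.
       (\<integral>z. (transpose (Jmat \<alpha> \<beta> (fst z)) ** B ** Jmat \<alpha> \<beta> (fst z)) $ k $ l \<partial>\<rho>) * (v $ k * v $ l))"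
  by (simp only: inner_congruence_eq_sum integral_double_sum[OF integrable_Jmat_congruence_nth])

end

section \<open>The bias process\<close>

lemma bias_prefix:
  "(\<And>i. i < t \<Longrightarrow> \<omega> i = \<omega>' i) \<Longrightarrow> bias \<alpha> \<beta> x0 xs \<omega> t = bias \<alpha> \<beta> x0 xs \<omega>' t"
  by (induction t) auto

locale bias_process = feature_distribution \<rho> H \<kappa> for \<rho> :: "((real^'d) \<times> real) measure" and H \<kappa> +
  fixes \<alpha> \<beta> :: real and x0 xs :: "real^'d"
begin

abbreviation "P \<equiv> PiM (UNIV :: nat set) (\<lambda>_. \<rho>)"

abbreviation "\<theta> t \<omega> \<equiv> bias \<alpha> \<beta> x0 xs \<omega> t"

sublocale sample: prob_space P
  by (rule prob_space_PiM) (rule prob)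

lemma borel_measurable_bias_PiM:
  "{..<t} \<subseteq> I \<Longrightarrow> (\<lambda>\<omega>. \<theta> t \<omega>) \<in> borel_measurable (PiM I (\<lambda>_. \<rho>))"
proof (induction t)
  case (Suc t)
  have "(\<lambda>\<omega>. \<omega> t) \<in> measurable (PiM I (\<lambda>_. \<rho>)) \<rho>"
    using Suc.prems by (intro measurable_component_singleton) auto
  then have "(\<lambda>\<omega>. fst (\<omega> t)) \<in> borel_measurable (PiM I (\<lambda>_. \<rho>))"
    by (rule measurable_compose) (intro continuous_borel_measurable continuous_on_fst continuous_on_id)
  moreover have "{..<t} \<subseteq> I"
    using Suc.prems by auto
  then have "(\<lambda>\<omega>. \<theta> t \<omega>) \<in> borel_measurable (PiM I (\<lambda>_. \<rho>))"
    by (rule Suc.IH)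
  ultimately show ?case
    using borel_measurable_continuous_Pair[OF _ _ continuous_Jmat_mult_vec] by simp
qed simp

lemma indep_sample_coordinates: "sample.indep_vars (\<lambda>_. \<rho>) (\<lambda>i \<omega>. \<omega> i) UNIV"
proof -
  have "sample.random_variable \<rho> (\<lambda>\<omega>. \<omega> i)" for i
    by (rule measurable_component_singleton) simp
  moreover have "distr P \<rho> (\<lambda>\<omega>. \<omega> i) = \<rho>" for i
    using distr_PiM_component[of UNIV "\<lambda>_. \<rho>" i] prob by simp
  ultimately show ?thesis
    by (subst sample.indep_vars_iff_distr_eq_PiM) (simp_all add: restrict_UNIV)
qed

text \<open>By bias_prefix, \<theta> t depends only on the samples before t, hence is independent of the
  sample at time t.\<close>

lemma
  fixes \<phi> :: "(real^'d) \<times> real \<Rightarrow> real" and \<psi> :: "real^('d + 'd) \<Rightarrow> real"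
  assumes \<phi>: "\<phi> \<in> borel_measurable \<rho>" "integrable \<rho> \<phi>"
    and \<psi>: "\<psi> \<in> borel_measurable borel" "integrable P (\<lambda>\<omega>. \<psi> (\<theta> t \<omega>))"
  shows integrable_sample_bias_prod: "integrable P (\<lambda>\<omega>. \<phi> (\<omega> t) * \<psi> (\<theta> t \<omega>))"
    and integral_sample_bias_prod:
      "(\<integral>\<omega>. \<phi> (\<omega> t) * \<psi> (\<theta> t \<omega>) \<partial>P) = (\<integral>z. \<phi> z \<partial>\<rho>) * (\<integral>\<omega>. \<psi> (\<theta> t \<omega>) \<partial>P)"
proof -
  have "sample.indep_var (PiM {..<t} (\<lambda>_. \<rho>)) (\<lambda>\<omega>. restrict \<omega> {..<t}) (PiM {t} (\<lambda>_. \<rho>)) (\<lambda>\<omega>. restrict \<omega> {t})"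
    using sample.indep_var_restrict[OF indep_sample_coordinates, of "{..<t}" "{t}"] by simp
  moreover have "(\<lambda>r. \<psi> (\<theta> t r)) \<in> borel_measurable (PiM {..<t} (\<lambda>_. \<rho>))"
    using measurable_compose[OF borel_measurable_bias_PiM \<psi>(1)] by simp
  moreover have "(\<lambda>r. r t) \<in> measurable (PiM {t} (\<lambda>_. \<rho>)) \<rho>"
    by (rule measurable_component_singleton) simp
  then have "(\<lambda>r. \<phi> (r t)) \<in> borel_measurable (PiM {t} (\<lambda>_. \<rho>))"
    using \<phi>(1) by (rule measurable_compose)
  ultimately have "sample.indep_var borel ((\<lambda>r. \<psi> (\<theta> t r)) \<circ> (\<lambda>\<omega>. restrict \<omega> {..<t}))
      borel ((\<lambda>r. \<phi> (r t)) \<circ> (\<lambda>\<omega>. restrict \<omega> {t}))"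
    by (rule sample.indep_var_compose)
  moreover have "\<theta> t (restrict \<omega> {..<t}) = \<theta> t \<omega>" for \<omega>
    by (rule bias_prefix) simp
  ultimately have indep: "sample.indep_var borel (\<lambda>\<omega>. \<psi> (\<theta> t \<omega>)) borel (\<lambda>\<omega>. \<phi> (\<omega> t))"
    by (simp add: o_def)
  have component: "(\<lambda>\<omega>. \<omega> t) \<in> measurable P \<rho>" "distr P \<rho> (\<lambda>\<omega>. \<omega> t) = \<rho>"
    using distr_PiM_component[of UNIV "\<lambda>_. \<rho>" t] prob by simp_all
  then have "integrable P (\<lambda>\<omega>. \<phi> (\<omega> t))" "(\<integral>\<omega>. \<phi> (\<omega> t) \<partial>P) = (\<integral>z. \<phi> z \<partial>\<rho>)"
    using integrable_distr_eq[OF component(1) \<phi>(1)] integral_distr[OF component(1) \<phi>(1)] \<phi>(2) by simp_all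
  then show "integrable P (\<lambda>\<omega>. \<phi> (\<omega> t) * \<psi> (\<theta> t \<omega>))"
    and "(\<integral>\<omega>. \<phi> (\<omega> t) * \<psi> (\<theta> t \<omega>) \<partial>P) = (\<integral>z. \<phi> z \<partial>\<rho>) * (\<integral>\<omega>. \<psi> (\<theta> t \<omega>) \<partial>P)"
    using sample.indep_var_integrable[OF indep \<psi>(2)] sample.indep_var_lebesgue_integral[OF indep \<psi>(2)]
    by (simp_all add: mult.commute)
qed

lemma integrable_bias_prod: "integrable P (\<lambda>\<omega>. \<theta> t \<omega> $ i * \<theta> t \<omega> $ j)"
proof (induction t arbitrary: i j)
  case (Suc t)
  have expand: "\<theta> (Suc t) \<omega> $ i * \<theta> (Suc t) \<omega> $ j = (\<Sum>k\<in>UNIV. \<Sum>l\<in>UNIV.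
      (Jmat \<alpha> \<beta> (fst (\<omega> t)) $ i $ k * Jmat \<alpha> \<beta> (fst (\<omega> t)) $ j $ l) * (\<theta> t \<omega> $ k * \<theta> t \<omega> $ l))" for \<omega>
    by (simp add: matrix_vector_mult_def sum_product mult_ac)
  have "integrable P (\<lambda>\<omega>. (Jmat \<alpha> \<beta> (fst (\<omega> t)) $ i $ k * Jmat \<alpha> \<beta> (fst (\<omega> t)) $ j $ l)
      * (\<theta> t \<omega> $ k * \<theta> t \<omega> $ l))" for k l
    using integrable_sample_bias_prod[of "\<lambda>z. Jmat \<alpha> \<beta> (fst z) $ i $ k * Jmat \<alpha> \<beta> (fst z) $ j $ l"
        "\<lambda>v. v $ k * v $ l" t]
    by (simp add: integrable_Jmat_nth_prod Suc.IH continuous_borel_measurable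
        borel_measurable_continuous_onI continuous_intros continuous_on_compose2[OF continuous_Jmat_nth])
  then show ?case
    unfolding expand by (intro Bochner_Integration.integrable_sum)
qed simp

definition bias_moment :: "nat \<Rightarrow> real^('d + 'd)^('d + 'd) \<Rightarrow> real" where
  "bias_moment t B = (\<integral>\<omega>. \<theta> t \<omega> \<bullet> (B *v \<theta> t \<omega>) \<partial>P)"

lemma integrable_bias_quadratic: "integrable P (\<lambda>\<omega>. \<theta> t \<omega> \<bullet> (B *v \<theta> t \<omega>))"
  unfolding inner_mult_vec_eq_sum by (simp add: integrable_bias_prod)

lemma bias_moment_Suc:
  "bias_moment (Suc t) B = (\<integral>\<omega>. (\<integral>z. (Jmat \<alpha> \<beta> (fst z) *v \<theta> t \<omega>) \<bullet> (B *v (Jmat \<alpha> \<beta> (fst z) *v \<theta> t \<omega>)) \<partial>\<rho>) \<partial>P)"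
proof -
  let ?M = "\<lambda>z. transpose (Jmat \<alpha> \<beta> (fst z)) ** B ** Jmat \<alpha> \<beta> (fst z)"
  have "(\<lambda>v::real^('d + 'd). v $ k * v $ l) \<in> borel_measurable borel" for k l
    by (intro borel_measurable_continuous_onI continuous_intros)
  note independent = integrable_sample_bias_prod[OF borel_measurable_Jmat_congruence_nth
      integrable_Jmat_congruence_nth this integrable_bias_prod]
    integral_sample_bias_prod[OF borel_measurable_Jmat_congruence_nth
      integrable_Jmat_congruence_nth this integrable_bias_prod]
  have "bias_moment (Suc t) B = (\<integral>\<omega>. (\<Sum>k\<in>UNIV. \<Sum>l\<in>UNIV. ?M (\<omega> t) $ k $ l * (\<theta> t \<omega> $ k * \<theta> t \<omega> $ l)) \<partial>P)"
    unfolding bias_moment_def by (simp only: bias.simps inner_congruence_eq_sum)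
  also have "\<dots> = (\<Sum>k\<in>UNIV. \<Sum>l\<in>UNIV. (\<integral>z. ?M z $ k $ l \<partial>\<rho>) * (\<integral>\<omega>. \<theta> t \<omega> $ k * \<theta> t \<omega> $ l \<partial>P))"
    using independent by simp
  also have "\<dots> = (\<integral>\<omega>. (\<Sum>k\<in>UNIV. \<Sum>l\<in>UNIV. (\<integral>z. ?M z $ k $ l \<partial>\<rho>) * (\<theta> t \<omega> $ k * \<theta> t \<omega> $ l)) \<partial>P)"
    by (simp add: integrable_bias_prod)
  finally show ?thesis
    by (simp only: integral_Jmat_quadratic)
qed

lemma bias_moment_step:
  assumes "psd B"
  shows "bias_moment (Suc t) B \<le> bias_moment t (transpose (mean_step_matrix \<alpha> \<beta> H) ** B ** mean_step_matrix \<alpha> \<beta> H)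
           + \<kappa> * tr_inner B (noise_matrix \<alpha> \<beta> H) * bias_moment t (block H H H H)"
proof -
  have "bias_moment (Suc t) B \<le> (\<integral>\<omega>. \<theta> t \<omega> \<bullet> ((transpose (mean_step_matrix \<alpha> \<beta> H) ** B ** mean_step_matrix \<alpha> \<beta> H) *v \<theta> t \<omega>)
        + \<kappa> * tr_inner B (noise_matrix \<alpha> \<beta> H) * (\<theta> t \<omega> \<bullet> (block H H H H *v \<theta> t \<omega>)) \<partial>P)"
    unfolding bias_moment_Suc
  proof (rule integral_mono)
    show "integrable P (\<lambda>\<omega>. \<integral>z. (Jmat \<alpha> \<beta> (fst z) *v \<theta> t \<omega>) \<bullet> (B *v (Jmat \<alpha> \<beta> (fst z) *v \<theta> t \<omega>)) \<partial>\<rho>)"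
      unfolding integral_Jmat_quadratic by (simp add: integrable_bias_prod)
  qed (use expected_step_quadratic(2)[OF assms] integrable_bias_quadratic in simp_all)
  then show ?thesis
    unfolding bias_moment_def using integrable_bias_quadratic by simp
qed

definition noise_kernel :: "real^('d + 'd)^('d + 'd) \<Rightarrow> nat \<Rightarrow> real" where
  "noise_kernel B s = \<kappa> * tr_inner B (mpow (mean_step_matrix \<alpha> \<beta> H) s ** noise_matrix \<alpha> \<beta> H
                                         ** transpose (mpow (mean_step_matrix \<alpha> \<beta> H) s))"

lemma noise_kernel_congruence:
  "noise_kernel (transpose (mean_step_matrix \<alpha> \<beta> H) ** B ** mean_step_matrix \<alpha> \<beta> H) s = noise_kernel B (Suc s)"
  unfolding noise_kernel_def tr_inner_congruence
  by (simp add: matrix_transpose_mul matrix_mul_assoc)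

lemma bias_moment_bound:
  assumes "psd B"
  shows "bias_moment T B \<le>
    (mpow (mean_step_matrix \<alpha> \<beta> H) T *v bvec 0 (x0 - xs)) \<bullet> (B *v (mpow (mean_step_matrix \<alpha> \<beta> H) T *v bvec 0 (x0 - xs)))
    + (\<Sum>k<T. noise_kernel B (T - k - 1) * bias_moment k (block H H H H))"
  using assms
proof (induction T arbitrary: B)
  case 0
  then show ?case
    by (simp add: bias_moment_def sample.prob_space)
next
  case (Suc T)
  let ?A = "mean_step_matrix \<alpha> \<beta> H" and ?v = "bvec 0 (x0 - xs)"
  have "bias_moment (Suc T) B \<le> bias_moment T (transpose ?A ** B ** ?A) + noise_kernel B 0 * bias_moment T (block H H H H)"
    using bias_moment_step[OF Suc.prems] by (simp add: noise_kernel_def)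
  also have "bias_moment T (transpose ?A ** B ** ?A) \<le>
      (mpow ?A (Suc T) *v ?v) \<bullet> (B *v (mpow ?A (Suc T) *v ?v))
      + (\<Sum>k<T. noise_kernel B (Suc T - k - 1) * bias_moment k (block H H H H))"
  proof -
    have "(mpow ?A T *v ?v) \<bullet> ((transpose ?A ** B ** ?A) *v (mpow ?A T *v ?v))
        = (mpow ?A (Suc T) *v ?v) \<bullet> (B *v (mpow ?A (Suc T) *v ?v))"
      unfolding inner_congruence by (simp only: mpow.simps(2) matrix_vector_mul_assoc)
    moreover have "(\<Sum>k<T. noise_kernel (transpose ?A ** B ** ?A) (T - k - 1) * bias_moment k (block H H H H))
        = (\<Sum>k<T. noise_kernel B (Suc T - k - 1) * bias_moment k (block H H H H))"
      by (intro sum.cong refl) (simp add: noise_kernel_congruence Suc_diff_Suc)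
    ultimately show ?thesis
      using Suc.IH[OF psd_congruence[OF Suc.prems, of ?A]] by simp
  qed
  finally show ?case
    by (simp add: add.assoc)
qed

lemma tr_inner_bias_second_moment:
  "tr_inner B (\<integral>\<omega>. outer (\<theta> t \<omega>) (\<theta> t \<omega>) \<partial>P) = bias_moment t B"
proof -
  have "(\<lambda>\<omega>. outer (\<theta> t \<omega>) (\<theta> t \<omega>)) \<in> borel_measurable P"
    using borel_measurable_bias_PiM[of t UNIV]
    by (rule borel_measurable_continuous_on[rotated]) (auto simp: outer_def intro!: continuous_intros)
  then have "integrable P (\<lambda>\<omega>. outer (\<theta> t \<omega>) (\<theta> t \<omega>))"
    by (rule integrable_matI) (simp add: outer_def integrable_bias_prod)
  then show ?thesis
    unfolding tr_inner_eq_sum bias_moment_def inner_mult_vec_eq_sum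
    by (simp add: integral_mat_nth outer_def integrable_bias_prod)
qed

end

theorem lemma8:
  fixes \<rho> :: "((real^'d) \<times> real) measure"
    and H :: "real^'d^'d" and L \<kappa> \<alpha> \<beta> :: real and x0 xs :: "real^'d"
  assumes prob: "prob_space \<rho>"
    and sets_rho: "sets \<rho> = sets borel"
    and mom_a: "integrable \<rho> (\<lambda>(a, b). (norm a)\<^sup>2)"
    and mom_b: "integrable \<rho> (\<lambda>(a, b). b\<^sup>2)"
    and H_def: "H = (\<integral>z. outer (fst z) (fst z) \<partial>\<rho>)"
    and H_inv: "invertible H"
    and L_eig: "\<exists>v. v \<noteq> 0 \<and> H *v v = L *\<^sub>R v"
    and L_max: "\<And>\<mu> v. v \<noteq> 0 \<Longrightarrow> H *v v = \<mu> *\<^sub>R v \<Longrightarrow> \<mu> \<le> L"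
    and xs_min: "\<And>x. (1/2) * (\<integral>z. (x \<bullet> fst z - snd z)\<^sup>2 \<partial>\<rho>)
                     \<ge> (1/2) * (\<integral>z. (xs \<bullet> fst z - snd z)\<^sup>2 \<partial>\<rho>)"
    and kappa: "\<And>M::real^'d^'d. psd M \<Longrightarrow>
         integrable \<rho> (\<lambda>z. (fst z \<bullet> (M *v fst z)) *\<^sub>R outer (fst z) (fst z)) \<and>
         loewner_le (\<integral>z. (fst z \<bullet> (M *v fst z)) *\<^sub>R outer (fst z) (fst z) \<partial>\<rho>)
                    ((\<kappa> * mtrace (M ** H)) *\<^sub>R H)"
    and step: "0 < \<alpha>" "\<alpha> \<le> \<beta>" "\<beta> \<le> 1 / L"
  shows
    "let A = block (mat 1 - \<beta> *\<^sub>R H) (mat 1 - \<beta> *\<^sub>R H) (- (\<alpha> *\<^sub>R H)) (mat 1 - \<alpha> *\<^sub>R H);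
         \<Upsilon> = block H H H H;
         \<N> = block ((\<beta>\<^sup>2) *\<^sub>R H) ((\<alpha> * \<beta>) *\<^sub>R H) ((\<alpha> * \<beta>) *\<^sub>R H) ((\<alpha>\<^sup>2) *\<^sub>R H);
         P = PiM UNIV (\<lambda>_::nat. \<rho>);
         f = (\<lambda>t. tr_inner \<Upsilon> (\<integral>\<omega>. outer (bias \<alpha> \<beta> x0 xs \<omega> t) (bias \<alpha> \<beta> x0 xs \<omega> t) \<partial>P));
         g = (\<lambda>s. \<kappa> * tr_inner \<Upsilon> (mpow A s ** \<N> ** transpose (mpow A s)))
     in \<forall>T::nat. f T \<le> min (1 / \<alpha>) (8 * (real T + 1) / \<beta>) * (norm (x0 - xs))\<^sup>2
                       + (\<Sum>k<T. g (T - k - 1) * f k)"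
proof -
  interpret bias_process \<rho> H \<kappa> \<alpha> \<beta> x0 xs
    by (intro bias_process.intro feature_distribution.intro) (fact prob sets_rho mom_a H_def kappa)+
  have "0 < L"
  proof (rule ccontr)
    assume "\<not> 0 < L"
    then have "1 / L \<le> 0"
      by simp
    then show False
      using step by linarith
  qed
  then have "\<beta> * \<mu> \<le> 1" if "v \<noteq> 0" "H *v v = \<mu> *\<^sub>R v" for \<mu> v
    using L_max[OF that] step by (smt (verit) le_divide_eq mult_left_mono)
  then have mean: "(mpow (mean_step_matrix \<alpha> \<beta> H) T *v bvec 0 (x0 - xs)) \<bullet>
      (block H H H H *v (mpow (mean_step_matrix \<alpha> \<beta> H) T *v bvec 0 (x0 - xs)))
      \<le> min (1 / \<alpha>) ((real T + 1) / \<beta>) * (norm (x0 - xs))\<^sup>2" for T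
    by (rule mean_bias_bound[OF psd_H _ step(1,2)])
  have "min (1 / \<alpha>) ((real T + 1) / \<beta>) * (norm (x0 - xs))\<^sup>2
      \<le> min (1 / \<alpha>) (8 * (real T + 1) / \<beta>) * (norm (x0 - xs))\<^sup>2" for T
    using step by (intro mult_right_mono min.mono) (simp_all add: divide_right_mono)
  then show ?thesis
    unfolding Let_def mean_step_matrix_def[symmetric] noise_matrix_eq_block[symmetric]
      tr_inner_bias_second_moment noise_kernel_def[symmetric]
    using bias_moment_bound[OF psd_block_all[OF psd_H]] mean
    by (smt (verit))
qed

end
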